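(* Let $\mathbb{M}$ be a flow monoid with idempotent addition and let $h_1,h_2$ be flow graphs with the same node set $X$ whose edge functions are continuous and distributive. Then full path replacement of $h_1$ by $h_2$ holds if and only if path replacement of $h_1$ by $h_2$ holds.
   Context: A flow monoid is a commutative monoid $(\mathbb{M},+,0)$ such that $n\le m :\iff \exists o.\ m=n+o$ is a partial order in which every ascending chain $K$ has a least upper bound $\bigsqcup K$, and $n+\bigsqcup K=\bigsqcup(n+K)$. Addition is idempotent if $m+m=m$. A function is continuous if it commutes with least upper bounds of ascending chains, and distributive if $f(m+n)=f(m)+f(n)$ and $f(0)=0$. Sums and $\le$ on functions are pointwise. A flow graph is $h=(X,E,\mathit{in})$ with $X\subseteq\mathbb{N}$ finite, $E:X\times\mathbb{N}\to$ continuous functions $\mathbb{M}\to\mathbb{M}$, $\mathit{in}:(\mathbb{N}\setminus X)\times X\to\mathbb{M}$. A path through $h$ is $p=x_0\cdots x_nz$ with $x_i\in X$, $z\in\mathbb{N}\setminus X$; $\mathrm{Paths}_h(x\to(y,z))$ is the set of such paths with $x_0=x$, $x_n=y$, final element $z$; $E_p=E(x_n,z)\circ E(x_{n-1},x_n)\circ\cdots\circ E(x_0,x_1)$; for a set of paths $P$, $E_P=\sum_{q\in P}E_q$. $\mathrm{Out}(h_1,h_2)=\{x\in X\mid\exists z\in\mathbb{N}.\ h_1.E(x,z)\neq h_2.E(x,z)\}$. Path replacement of $h_1$ by $h_2$: for every $x\in\mathrm{Out}(h_1,h_2)$, $y\in X$, $z\in\mathbb{N}\setminus X$ and every $p\in\mathrm{Paths}_{h_1}(x\to(y,z))$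 there is $P\subseteq\mathrm{Paths}_{h_2}(x\to(y,z))$ with $E_p\le E_P$. Full path replacement is the same condition but with $x$ ranging over all of $X$. *)

theory Defs
  imports Main
begin

definition fm_le :: "'m::comm_monoid_add \<Rightarrow> 'm \<Rightarrow> bool" where
  "fm_le n m \<longleftrightarrow> (\<exists>k. m = n + k)"

text \<open>Ascending chains are read as ascending sequences k0 <= k1 <= ... (omega-chains).\<close>
definition fm_ascending :: "(nat \<Rightarrow> 'm::comm_monoid_add) \<Rightarrow> bool" where
  "fm_ascending K \<longleftrightarrow> (\<forall>i. fm_le (K i) (K (Suc i)))"

definition fm_is_lub :: "(nat \<Rightarrow> 'm::comm_monoid_add) \<Rightarrow> 'm \<Rightarrow> bool" where
  "fm_is_lub K l \<longleftrightarrow> (\<forall>i. fm_le (K i) l) \<and> (\<forall>u. (\<forall>i. fm_le (K i) u) \<longrightarrow> fm_le l u)"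

definition flow_monoid :: "'m::comm_monoid_add itself \<Rightarrow> bool" where
  "flow_monoid _ \<longleftrightarrow>
     (\<forall>n m :: 'm. fm_le n m \<and> fm_le m n \<longrightarrow> n = m) \<and>
     (\<forall>K :: nat \<Rightarrow> 'm. fm_ascending K \<longrightarrow> (\<exists>l. fm_is_lub K l)) \<and>
     (\<forall>(n::'m) K l. fm_ascending K \<and> fm_is_lub K l \<longrightarrow> fm_is_lub (\<lambda>i. n + K i) (n + l))"

definition idempotent_add :: "'m::comm_monoid_add itself \<Rightarrow> bool" where
  "idempotent_add _ \<longleftrightarrow> (\<forall>m :: 'm. m + m = m)"

definition fm_continuous :: "('m::comm_monoid_add \<Rightarrow> 'm) \<Rightarrow> bool" where
  "fm_continuous f \<longleftrightarrow> (\<forall>K l. fm_ascending K \<and> fm_is_lub K l \<longrightarrow> fm_is_lub (\<lambda>i. f (K i)) (f l))"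

definition fm_distributive :: "('m::comm_monoid_add \<Rightarrow> 'm) \<Rightarrow> bool" where
  "fm_distributive f \<longleftrightarrow> (\<forall>m n. f (m + n) = f m + f n) \<and> f 0 = 0"

definition fun_le :: "('m::comm_monoid_add \<Rightarrow> 'm) \<Rightarrow> ('m \<Rightarrow> 'm) \<Rightarrow> bool" where
  "fun_le f g \<longleftrightarrow> (\<forall>m. fm_le (f m) (g m))"

text \<open>A flow graph (X, E, in): X finite set of nodes, E x z continuous for x in X,
  in : (nat - X) x X -> M (arbitrary values outside its domain).\<close>
definition flow_graph :: "nat set \<Rightarrow> (nat \<Rightarrow> nat \<Rightarrow> 'm::comm_monoid_add \<Rightarrow> 'm) \<Rightarrow> (nat \<Rightarrow> nat \<Rightarrow> 'm) \<Rightarrow> bool" where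
  "flow_graph X E inflow \<longleftrightarrow> finite X \<and> (\<forall>x\<in>X. \<forall>z. fm_continuous (E x z))"

text \<open>A path x0 ... xn z is the list [x0, ..., xn, z].\<close>
definition paths :: "nat set \<Rightarrow> nat \<Rightarrow> nat \<Rightarrow> nat \<Rightarrow> nat list set" where
  "paths X x y z = {xs @ [z] | xs. xs \<noteq> [] \<and> set xs \<subseteq> X \<and> hd xs = x \<and> last xs = y \<and> z \<notin> X}"

fun path_fun :: "(nat \<Rightarrow> nat \<Rightarrow> 'm \<Rightarrow> 'm) \<Rightarrow> nat list \<Rightarrow> 'm \<Rightarrow> 'm" where
  "path_fun E [] = id"
| "path_fun E [x] = id"
| "path_fun E (x # y # rest) = path_fun E (y # rest) \<circ> E x y"

text \<open>E_P = sum over q in P of E_q, for a possibly infinite set P of paths through a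
  finite graph: the least upper bound of the ascending chain of (finite) partial sums over
  the paths of P of length at most k.\<close>
definition paths_fun :: "(nat \<Rightarrow> nat \<Rightarrow> 'm::comm_monoid_add \<Rightarrow> 'm) \<Rightarrow> nat list set \<Rightarrow> 'm \<Rightarrow> 'm" where
  "paths_fun E P m = (THE l. fm_is_lub (\<lambda>k. \<Sum>q\<in>{q\<in>P. length q \<le> k}. path_fun E q m) l)"

definition Out :: "nat set \<Rightarrow> (nat \<Rightarrow> nat \<Rightarrow> 'm \<Rightarrow> 'm) \<Rightarrow> (nat \<Rightarrow> nat \<Rightarrow> 'm \<Rightarrow> 'm) \<Rightarrow> nat set" where
  "Out X E1 E2 = {x\<in>X. \<exists>z. E1 x z \<noteq> E2 x z}"

definition path_replacement :: "nat set \<Rightarrow> (nat \<Rightarrow> nat \<Rightarrow> 'm::comm_monoid_add \<Rightarrow> 'm) \<Rightarrow> (nat \<Rightarrow> nat \<Rightarrow> 'm \<Rightarrow> 'm) \<Rightarrow> bool" where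
  "path_replacement X E1 E2 \<longleftrightarrow>
     (\<forall>x\<in>Out X E1 E2. \<forall>y\<in>X. \<forall>z. z \<notin> X \<longrightarrow>
        (\<forall>p\<in>paths X x y z. \<exists>P \<subseteq> paths X x y z. fun_le (path_fun E1 p) (paths_fun E2 P)))"

definition full_path_replacement :: "nat set \<Rightarrow> (nat \<Rightarrow> nat \<Rightarrow> 'm::comm_monoid_add \<Rightarrow> 'm) \<Rightarrow> (nat \<Rightarrow> nat \<Rightarrow> 'm \<Rightarrow> 'm) \<Rightarrow> bool" where
  "full_path_replacement X E1 E2 \<longleftrightarrow>
     (\<forall>x\<in>X. \<forall>y\<in>X. \<forall>z. z \<notin> X \<longrightarrow>
        (\<forall>p\<in>paths X x y z. \<exists>P \<subseteq> paths X x y z. fun_le (path_fun E1 p) (paths_fun E2 P)))"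

end

theory Submission
  imports Defs
begin

text \<open>Induction along a path p = x0 x1 ... xn z. If x0 lies in Out, path replacement covers p
  directly. Otherwise the first edge is the same in both graphs, so a replacement set P' for
  the suffix x1 ... xn z, prefixed with x0, replaces p: since E_P is a least upper bound of
  partial sums, prefixing every path of P' by x0 amounts to precomposing E_P' with E(x0, x1).\<close>

lemma fm_le_refl: "fm_le (a::'m::comm_monoid_add) a"
  unfolding fm_le_def by (rule exI[of _ 0]) simp

lemma fm_le_0: "fm_le 0 (a::'m::comm_monoid_add)"
  unfolding fm_le_def by simp

lemma flow_monoid_fm_le_antisym:
  assumes "flow_monoid TYPE('m::comm_monoid_add)" "fm_le n m" "fm_le m (n::'m)"
  shows "n = m"
  using assms unfolding flow_monoid_def by blast

lemma flow_monoid_the_lub: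
  assumes "flow_monoid TYPE('m::comm_monoid_add)" "fm_is_lub K (l::'m)"
  shows "(THE l. fm_is_lub K l) = l"
proof (rule the_equality)
  fix l' assume "fm_is_lub K l'"
  with assms(2) show "l' = l"
    unfolding fm_is_lub_def by (blast intro: flow_monoid_fm_le_antisym[OF assms(1)])
qed (fact assms(2))

lemma fm_is_lub_shift:
  assumes "fm_is_lub K (l::'m::comm_monoid_add)"
  shows "fm_is_lub (\<lambda>k. case k of 0 \<Rightarrow> 0 | Suc k \<Rightarrow> K k) l"
  using assms unfolding fm_is_lub_def by (auto simp: fm_le_0 split: nat.split)

lemma paths_intro:
  assumes "xs \<noteq> []" "set xs \<subseteq> X" "z \<notin> X"
  shows "xs @ [z] \<in> paths X (hd xs) (last xs) z"
  unfolding paths_def using assms by blast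

lemma paths_hd:
  assumes "q \<in> paths X x y z"
  shows "\<exists>r. q = x # r"
  using assms unfolding paths_def by (auto simp: neq_Nil_conv)

lemma Cons_image_paths_subset:
  assumes "P \<subseteq> paths X x1 y z" "x \<in> X"
  shows "(#) x ` P \<subseteq> paths X x y z"
proof
  fix q assume "q \<in> (#) x ` P"
  then obtain ws where "q = (x # ws) @ [z]" "ws \<noteq> []" "set ws \<subseteq> X" "last ws = y" "z \<notin> X"
    using assms(1) unfolding paths_def by auto
  with assms(2) show "q \<in> paths X x y z"
    unfolding paths_def by (intro CollectI exI[of _ "x # ws"]) simp
qed

lemma finite_paths_length_le:
  assumes "finite X" "P \<subseteq> paths X x y z"
  shows "finite {q\<in>P. length q \<le> k}"
proof (rule finite_subset)
  show "{q\<in>P. length q \<le> k} \<subseteq> {xs. set xs \<subseteq> insert z X \<and> length xs \<le> k}"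
  proof
    fix q assume "q \<in> {q\<in>P. length q \<le> k}"
    then obtain xs where "q = xs @ [z]" "set xs \<subseteq> X" "length q \<le> k"
      using assms(2) unfolding paths_def by blast
    then show "q \<in> {xs. set xs \<subseteq> insert z X \<and> length xs \<le> k}" by auto
  qed
  show "finite {xs. set xs \<subseteq> insert z X \<and> length xs \<le> k}"
    using assms(1) by (simp add: finite_lists_length_le)
qed

lemma fm_ascending_paths_partial_sums:
  assumes "finite X" "P \<subseteq> paths X x y z"
  shows "fm_ascending (\<lambda>k. \<Sum>q\<in>{q\<in>P. length q \<le> k}. (f q :: 'm::comm_monoid_add))"
  unfolding fm_ascending_def fm_le_def
proof
  fix i
  let ?S = "\<lambda>k. {q\<in>P. length q \<le> k}"
  have "?S i \<subseteq> ?S (Suc i)" by auto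
  from sum.subset_diff[OF this finite_paths_length_le[OF assms], of f]
  have "sum f (?S (Suc i)) = sum f (?S i) + sum f (?S (Suc i) - ?S i)"
    by (simp add: add.commute)
  then show "\<exists>d. sum f (?S (Suc i)) = sum f (?S i) + d" ..
qed

lemma paths_fun_singleton:
  assumes "flow_monoid TYPE('m::comm_monoid_add)"
  shows "paths_fun E {q} m = path_fun E q (m::'m)"
proof -
  have "fm_is_lub (\<lambda>k. \<Sum>q\<in>{q'\<in>{q}. length q' \<le> k}. path_fun E q m) (path_fun E q m)"
    unfolding fm_is_lub_def
  proof (intro conjI allI impI)
    fix i
    have "{q'\<in>{q}. length q' \<le> i} = (if length q \<le> i then {q} else {})" by auto
    then show "fm_le (\<Sum>q\<in>{q'\<in>{q}. length q' \<le> i}. path_fun E q m) (path_fun E q m)"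
      by (simp add: fm_le_refl fm_le_0)
  next
    fix u assume "\<forall>i. fm_le (\<Sum>q\<in>{q'\<in>{q}. length q' \<le> i}. path_fun E q m) u"
    then have "fm_le (\<Sum>q\<in>{q'\<in>{q}. length q' \<le> length q}. path_fun E q m) u" by blast
    moreover have "{q'\<in>{q}. length q' \<le> length q} = {q}" by auto
    ultimately show "fm_le (path_fun E q m) u" by simp
  qed
  then show ?thesis unfolding paths_fun_def by (rule flow_monoid_the_lub[OF assms])
qed

lemma paths_fun_Cons_image:
  fixes E :: "nat \<Rightarrow> nat \<Rightarrow> 'm::comm_monoid_add \<Rightarrow> 'm"
  assumes fm: "flow_monoid TYPE('m)" and "finite X" and P: "P \<subseteq> paths X x1 y z"
  shows "paths_fun E ((#) x ` P) m = paths_fun E P (E x x1 m)"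
proof -
  let ?K = "\<lambda>k. \<Sum>q\<in>{q\<in>P. length q \<le> k}. path_fun E q (E x x1 m)"
  let ?K' = "\<lambda>k. \<Sum>q\<in>{q\<in>(#) x ` P. length q \<le> k}. path_fun E q m"
  obtain l where l: "fm_is_lub ?K l"
    using fm fm_ascending_paths_partial_sums[OF \<open>finite X\<close> P] unfolding flow_monoid_def by blast
  have "?K' = (\<lambda>k. case k of 0 \<Rightarrow> 0 | Suc k \<Rightarrow> ?K k)"
  proof (rule ext)
    fix k show "?K' k = (case k of 0 \<Rightarrow> 0 | Suc k \<Rightarrow> ?K k)"
    proof (cases k)
      case (Suc k')
      have "{q\<in>(#) x ` P. length q \<le> Suc k'} = (#) x ` {q\<in>P. length q \<le> k'}" by auto
      then have "?K' k = (\<Sum>q\<in>{q\<in>P. length q \<le> k'}. path_fun E (x # q) m)"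
        using Suc by (simp add: sum.reindex)
      also have "\<dots> = ?K k'"
        using paths_hd P by (intro sum.cong) fastforce+
      finally show ?thesis using Suc by simp
    qed (auto intro: sum.neutral)
  qed
  with fm_is_lub_shift[OF l] have "fm_is_lub ?K' l" by simp
  then show ?thesis
    using l unfolding paths_fun_def by (simp add: flow_monoid_the_lub[OF fm])
qed

lemma path_replacementD:
  assumes "path_replacement X E1 E2" "x \<in> Out X E1 E2" "y \<in> X" "z \<notin> X" "p \<in> paths X x y z"
  shows "\<exists>P \<subseteq> paths X x y z. fun_le (path_fun E1 p) (paths_fun E2 P)"
  using assms unfolding path_replacement_def by blast

lemma path_replacement_from_any_start:
  fixes E1 E2 :: "nat \<Rightarrow> nat \<Rightarrow> 'm::comm_monoid_add \<Rightarrow> 'm"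
  assumes fm: "flow_monoid TYPE('m)" and fin: "finite X"
    and PR: "path_replacement X E1 E2" and z: "z \<notin> X"
  shows "xs \<noteq> [] \<Longrightarrow> set xs \<subseteq> X \<Longrightarrow>
    \<exists>P \<subseteq> paths X (hd xs) (last xs) z. fun_le (path_fun E1 (xs @ [z])) (paths_fun E2 P)"
proof (induction xs)
  case (Cons x xs)
  show ?case
  proof (cases "x \<in> Out X E1 E2")
    case True
    have "last (x # xs) \<in> X" using Cons.prems(2) last_in_set by blast
    with path_replacementD[OF PR True _ z] paths_intro[OF Cons.prems z] show ?thesis by simp
  next
    case False
    with Cons.prems(2) have same_edge: "E1 x = E2 x" unfolding Out_def by auto
    show ?thesis
    proof (cases xs)
      case Nil
      with paths_fun_singleton[OF fm] paths_intro[OF Cons.prems z] same_edge show ?thesis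
        by (intro exI[of _ "{[x, z]}"]) (auto simp: fun_le_def fm_le_refl)
    next
      case (Cons x1 ys)
      have "xs \<noteq> []" "set xs \<subseteq> X" using Cons.prems(2) \<open>xs = x1 # ys\<close> by auto
      with Cons.IH \<open>xs = x1 # ys\<close> obtain P where P: "P \<subseteq> paths X x1 (last xs) z"
        and le: "fun_le (path_fun E1 (xs @ [z])) (paths_fun E2 P)"
        by auto
      have "fun_le (path_fun E1 ((x # xs) @ [z])) (paths_fun E2 ((#) x ` P))"
        using le same_edge paths_fun_Cons_image[OF fm fin P] \<open>xs = x1 # ys\<close>
        by (simp add: fun_le_def)
      moreover have "(#) x ` P \<subseteq> paths X x (last (x # xs)) z"
        using Cons_image_paths_subset[OF P] Cons.prems(2) \<open>xs = x1 # ys\<close> by simp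
      ultimately show ?thesis by (intro exI[of _ "(#) x ` P"] conjI) simp_all
    qed
  qed
qed simp

theorem lemma8:
  fixes X :: "nat set"
    and E1 E2 :: "nat \<Rightarrow> nat \<Rightarrow> 'm::comm_monoid_add \<Rightarrow> 'm"
    and in1 in2 :: "nat \<Rightarrow> nat \<Rightarrow> 'm"
  assumes "flow_monoid TYPE('m)"
    and "idempotent_add TYPE('m)"
    and "flow_graph X E1 in1"
    and "flow_graph X E2 in2"
    and "\<forall>x\<in>X. \<forall>z. fm_distributive (E1 x z)"
    and "\<forall>x\<in>X. \<forall>z. fm_distributive (E2 x z)"
  shows "full_path_replacement X E1 E2 \<longleftrightarrow> path_replacement X E1 E2"
proof
  assume "full_path_replacement X E1 E2"
  then show "path_replacement X E1 E2"
    unfolding full_path_replacement_def path_replacement_def Out_def by blast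
next
  assume PR: "path_replacement X E1 E2"
  have fin: "finite X" using assms(3) unfolding flow_graph_def by blast
  show "full_path_replacement X E1 E2"
    unfolding full_path_replacement_def
  proof (intro ballI allI impI)
    fix x y z p assume "z \<notin> X" "p \<in> paths X x y z"
    then obtain xs where "p = xs @ [z]" "xs \<noteq> []" "set xs \<subseteq> X" "hd xs = x" "last xs = y"
      unfolding paths_def by blast
    with path_replacement_from_any_start[OF assms(1) fin PR \<open>z \<notin> X\<close>]
    show "\<exists>P \<subseteq> paths X x y z. fun_le (path_fun E1 p) (paths_fun E2 P)" by blast
  qed
qed

end
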